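(* Let $(X,d)$ be a tree space, let $x,y,z\in X$ be distinct, let $r\in X$ be the Steiner point of $x,y,z$, and let $V\subseteq X\setminus\{x,y,z\}$ be a finite set of points. Then: (1) If $w\in \mathrm{Zone}_1(x)$, then for every $\hat w\in V\setminus \mathrm{Zone}_1(x)$ we have $x\in g(w,\hat w)$. (2) If $w\in \mathrm{Zone}_2(x)$, then for every $\hat w\in V\setminus\big(\mathrm{Zone}_1(x)\cup\mathrm{Zone}_2(x)\big)$ we have $r\in g(w,\hat w)$.
   Context: A tree space ($\mathbb{R}$-tree) is a metric space in which any two points $a,b$ are joined by a unique geodesic segment $g(a,b)$, and the union of two geodesic segments $g(a,b),g(b,c)$ meeting only at $b$ is $g(a,c)$. For distinct $x,y,z$ in a tree space, the geodesics $g(x,y),g(y,z),g(x,z)$ meet in a unique point $r$, the Steiner point (it is the center of the universal tree on $x,y,z$, with $d(x,r)=(y,z)_x$ etc.). The Gromov product is $(a,b)_c=\tfrac12\big(d(c,a)+d(c,b)-d(a,b)\big)$. For $w\in V$ and a permutation $\pi$ of $\{x,y,z\}$ define the zones: $w\in\mathrm{Zone}_1(r)$ if $(x,y)_w=(x,z)_w=(y,z)_w>0$; $w\in\mathrm{Zone}_1(\pi x)$ if $(\pi x,\pi y)_w=(\pi x,\pi z)_w<(\pi y,\pi z)_w$ and $d(\pi x,w)=(\pi x,\pi y)_w$; $w\in\mathrm{Zone}_2(\pi x)$ if $(\pi x,\pi y)_w=(\pi x,\pi z)_w<(\pi y,\pi z)_w$ and $d(\pi x,w)>(\pi x,\pi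 y)_w$. (In particular $\mathrm{Zone}_1(x),\mathrm{Zone}_2(x)$ are these with $\pi$ the identity.) *)

theory Defs
  imports "HOL-Analysis.Analysis"
begin

definition geodesic_segment :: "'a::metric_space set \<Rightarrow> 'a \<Rightarrow> 'a \<Rightarrow> 'a set \<Rightarrow> bool" where
  "geodesic_segment X a b S \<longleftrightarrow>
     (\<exists>\<gamma>::real \<Rightarrow> 'a. \<gamma> ` {0..dist a b} = S \<and> S \<subseteq> X \<and>
        \<gamma> 0 = a \<and> \<gamma> (dist a b) = b \<and>
        (\<forall>s\<in>{0..dist a b}. \<forall>t\<in>{0..dist a b}. dist (\<gamma> s) (\<gamma> t) = \<bar>s - t\<bar>))"

definition geod :: "'a::metric_space set \<Rightarrow> 'a \<Rightarrow> 'a \<Rightarrow> 'a set" where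
  "geod X a b = (THE S. geodesic_segment X a b S)"

definition tree_space :: "'a::metric_space set \<Rightarrow> bool" where
  "tree_space X \<longleftrightarrow>
     (\<forall>a\<in>X. \<forall>b\<in>X. \<exists>!S. geodesic_segment X a b S) \<and>
     (\<forall>a\<in>X. \<forall>b\<in>X. \<forall>c\<in>X. geod X a b \<inter> geod X b c = {b} \<longrightarrow>
        geod X a b \<union> geod X b c = geod X a c)"

definition gromov :: "'a::metric_space \<Rightarrow> 'a \<Rightarrow> 'a \<Rightarrow> real" where
  "gromov a b c = (dist c a + dist c b - dist a b) / 2"

text \<open>Zones w.r.t. the ordered triple (x,y,z) (permutation = identity).\<close>
definition zone1 :: "'a::metric_space \<Rightarrow> 'a \<Rightarrow> 'a \<Rightarrow> 'a \<Rightarrow> bool" where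
  "zone1 x y z w \<longleftrightarrow> gromov x y w = gromov x z w \<and> gromov x z w < gromov y z w
     \<and> dist x w = gromov x y w"

definition zone2 :: "'a::metric_space \<Rightarrow> 'a \<Rightarrow> 'a \<Rightarrow> 'a \<Rightarrow> bool" where
  "zone2 x y z w \<longleftrightarrow> gromov x y w = gromov x z w \<and> gromov x z w < gromov y z w
     \<and> dist x w > gromov x y w"

end

(* In a tree space c lies on g(a,b) iff d(a,c) + d(c,b) = d(a,b). The geodesics from a to b and
   from a to c agree up to a last common point m; any point of g(b,m) \<inter> g(m,c) would be a later
   common point, so the gluing axiom puts m on g(b,c): every triple has a median. Medians give the
   separation property of trees: if x lies between w and y, then for any w' either x \<in> g(w,w')
   or x lies between w' and y.
   Zone_1(x) consists of the w with x between w and both y and z (and (y,z)_x > 0), so applying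
   separation to y and to z shows x \<in> g(w,w') for w' outside Zone_1(x). Zone_1(x) \<union> Zone_2(x)
   consists of the w for which r is not between w and x, so separation applied to w' (for which
   r is between w' and x) gives r \<in> g(w,w'). *)

theory Submission
  imports Defs
begin

definition btw :: "'a::metric_space \<Rightarrow> 'a \<Rightarrow> 'a \<Rightarrow> bool" where
  "btw a c b \<longleftrightarrow> dist a c + dist c b = dist a b"

lemma btw_sym: "btw a c b \<longleftrightarrow> btw b c a"
  unfolding btw_def by (simp add: dist_commute add.commute)

lemma btw_left [simp]: "btw a a b" and btw_right [simp]: "btw a b b"
  unfolding btw_def by simp_all

lemma btw_trans: "btw q m n \<Longrightarrow> btw q n b \<Longrightarrow> btw q m b"
  using dist_triangle[of m b n] dist_triangle[of q b m] unfolding btw_def by linarith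

lemma btw_shrink: "btw a m x \<Longrightarrow> btw a x y \<Longrightarrow> btw m x y"
  using dist_triangle[of m y x] dist_triangle[of a y m] unfolding btw_def by linarith

lemma btw_opposite_eq:
  assumes "btw q m a" "btw q m b" "btw a q b"
  shows "m = q"
proof -
  have "dist q m = 0"
    using assms dist_triangle[of a b m] dist_commute[of a m] dist_commute[of b m]
      dist_commute[of a q] zero_le_dist[of q m] unfolding btw_def by linarith
  then show ?thesis by simp
qed

definition unit_speed :: "real \<Rightarrow> (real \<Rightarrow> 'a::metric_space) \<Rightarrow> bool" where
  "unit_speed D g \<longleftrightarrow> (\<forall>s\<in>{0..D}. \<forall>t\<in>{0..D}. dist (g s) (g t) = \<bar>s - t\<bar>)"

lemma unit_speedD:
  "unit_speed D g \<Longrightarrow> s \<in> {0..D} \<Longrightarrow> t \<in> {0..D} \<Longrightarrow> dist (g s) (g t) = \<bar>s - t\<bar>"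
  unfolding unit_speed_def by blast

lemma unit_speed_inverse:
  assumes "unit_speed D g" "p \<in> g ` {0..D}"
  shows "dist (g 0) p \<in> {0..D}" "g (dist (g 0) p) = p"
proof -
  obtain s where s: "s \<in> {0..D}" "p = g s" using assms(2) by blast
  moreover have "dist (g 0) (g s) = s" using unit_speedD[OF assms(1), of 0 s] s by simp
  ultimately show "dist (g 0) p \<in> {0..D}" "g (dist (g 0) p) = p" by simp_all
qed

lemma geodesic_segment_iff_unit_speed:
  "geodesic_segment X a b S \<longleftrightarrow>
    (\<exists>g. g ` {0..dist a b} = S \<and> S \<subseteq> X \<and> g 0 = a \<and> g (dist a b) = b \<and> unit_speed (dist a b) g)"
  unfolding geodesic_segment_def unit_speed_def ..

lemma geodesic_segmentE:
  assumes "geodesic_segment X a b S"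
  obtains g where "g ` {0..dist a b} = S" "S \<subseteq> X" "g 0 = a" "g (dist a b) = b"
    "unit_speed (dist a b) g"
  using assms unfolding geodesic_segment_iff_unit_speed by blast

lemma geodesic_segment_ends:
  assumes "geodesic_segment X a b S"
  shows "a \<in> S" "b \<in> S"
proof -
  obtain g where g: "g ` {0..dist a b} = S" "g 0 = a" "g (dist a b) = b"
    using assms by (rule geodesic_segmentE)
  have "g 0 \<in> g ` {0..dist a b}" "g (dist a b) \<in> g ` {0..dist a b}" by simp_all
  then show "a \<in> S" "b \<in> S" using g by simp_all
qed

lemma geodesic_segment_btw:
  assumes "geodesic_segment X a b S" "c \<in> S"
  shows "c \<in> X" "btw a c b"
proof -
  obtain g where g: "g ` {0..dist a b} = S" "S \<subseteq> X" "g 0 = a" "g (dist a b) = b"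
    "unit_speed (dist a b) g"
    using assms(1) by (rule geodesic_segmentE)
  have c: "dist a c \<in> {0..dist a b}" "g (dist a c) = c"
    using unit_speed_inverse[OF g(5)] assms(2) g(1,3) by auto
  have "dist c b = dist a b - dist a c"
    using unit_speedD[OF g(5) c(1), of "dist a b"] c g(4) by simp
  then show "btw a c b" unfolding btw_def by simp
  show "c \<in> X" using g(2) assms(2) by blast
qed

lemma geodesic_segment_dist:
  assumes "geodesic_segment X a b S" "c \<in> S" "c' \<in> S"
  shows "dist c c' = \<bar>dist a c - dist a c'\<bar>"
proof -
  obtain g where g: "g ` {0..dist a b} = S" "g 0 = a" "unit_speed (dist a b) g"
    using assms(1) by (rule geodesic_segmentE)
  show ?thesis
    using unit_speed_inverse[OF g(3), of c] unit_speed_inverse[OF g(3), of c']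
      unit_speedD[OF g(3), of "dist a c" "dist a c'"] assms(2,3) g(1,2) by auto
qed

lemma geodesic_segment_append:
  assumes S1: "geodesic_segment X a c S1" and S2: "geodesic_segment X c b S2"
    and "btw a c b"
  shows "geodesic_segment X a b (S1 \<union> S2)"
proof -
  define L M where "L = dist a c" and "M = dist c b"
  obtain g1 where g1: "g1 ` {0..L} = S1" "S1 \<subseteq> X" "g1 0 = a" "g1 L = c" "unit_speed L g1"
    using S1 unfolding L_def by (rule geodesic_segmentE)
  obtain g2 where g2: "g2 ` {0..M} = S2" "S2 \<subseteq> X" "g2 0 = c" "g2 M = b" "unit_speed M g2"
    using S2 unfolding M_def by (rule geodesic_segmentE)
  have LM: "dist a b = L + M" "0 \<le> L" "0 \<le> M"
    using \<open>btw a c b\<close> unfolding btw_def L_def M_def by auto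
  define g where "g t = (if t \<le> L then g1 t else g2 (t - L))" for t
  have across: "dist (g s) (g t) = t - s" if "0 \<le> s" "s \<le> L" "L < t" "t \<le> L + M" for s t
  proof -
    have "dist (g1 s) c = L - s" "dist a (g1 s) = s"
      using unit_speedD[OF g1(5), of s L] unit_speedD[OF g1(5), of 0 s] that g1(3,4) by simp_all
    moreover have "dist c (g2 (t - L)) = t - L" "dist (g2 (t - L)) b = M - (t - L)"
      using unit_speedD[OF g2(5), of 0 "t - L"] unit_speedD[OF g2(5), of "t - L" M] that g2(3,4)
      by simp_all
    ultimately have "dist (g1 s) (g2 (t - L)) = t - s"
      using dist_triangle[of "g1 s" "g2 (t - L)" c] dist_triangle[of a b "g1 s"]
        dist_triangle[of "g1 s" b "g2 (t - L)"] LM(1) by linarith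
    then show ?thesis using that unfolding g_def by simp
  qed
  have "dist (g s) (g t) = \<bar>s - t\<bar>" if "s \<in> {0..L + M}" "t \<in> {0..L + M}" for s t
    using that
  proof (induction s t rule: linorder_wlog)
    case (le s t)
    consider "t \<le> L" | "s \<le> L" "L < t" | "L < s" by linarith
    then show ?case
    proof cases
      case 1
      then show ?thesis using le unit_speedD[OF g1(5), of s t] unfolding g_def by simp
    next
      case 2
      then show ?thesis using le across[of s t] by simp
    next
      case 3
      then show ?thesis using le unit_speedD[OF g2(5), of "s - L" "t - L"] unfolding g_def by simp
    qed
  next
    case (sym s t)
    then show ?case by (simp add: dist_commute abs_minus_commute)
  qed
  then have "unit_speed (dist a b) g" unfolding unit_speed_def LM(1) by blast
  moreover have "g ` {0..dist a b} = S1 \<union> S2"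
  proof
    show "g ` {0..dist a b} \<subseteq> S1 \<union> S2"
      using g1(1) g2(1) LM unfolding g_def by force
    have "S1 = g ` {0..L}" using g1(1) unfolding g_def by auto
    moreover have "S2 \<subseteq> g ` {L..L + M}"
    proof
      fix p assume "p \<in> S2"
      then obtain s where s: "s \<in> {0..M}" "p = g2 s" using g2(1) by blast
      show "p \<in> g ` {L..L + M}"
      proof (cases "s = 0")
        case True
        then have "p = g L" using s g1(4) g2(3) unfolding g_def by simp
        then show ?thesis using LM by auto
      next
        case False
        then have "p = g (L + s)" using s unfolding g_def by simp
        then show ?thesis using s by auto
      qed
    qed
    ultimately show "S1 \<union> S2 \<subseteq> g ` {0..dist a b}" using LM by auto
  qed
  moreover have "g 0 = a" "g (dist a b) = b"
    using g1(3,4) g2(3,4) LM unfolding g_def by auto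
  moreover have "S1 \<union> S2 \<subseteq> X" using g1(2) g2(2) by blast
  ultimately show ?thesis unfolding geodesic_segment_iff_unit_speed by blast
qed

lemma geod_geodesic_segment:
  assumes "tree_space X" "a \<in> X" "b \<in> X"
  shows "geodesic_segment X a b (geod X a b)"
proof -
  have "\<exists>!S. geodesic_segment X a b S" using assms unfolding tree_space_def by blast
  then show ?thesis unfolding geod_def by (rule theI')
qed

lemma geod_eqI:
  assumes "tree_space X" "a \<in> X" "b \<in> X" "geodesic_segment X a b S"
  shows "geod X a b = S"
  using assms geod_geodesic_segment[OF assms(1-3)] unfolding tree_space_def by blast

lemma geod_union:
  assumes "tree_space X" "a \<in> X" "b \<in> X" "c \<in> X" "geod X a b \<inter> geod X b c = {b}"
  shows "geod X a b \<union> geod X b c = geod X a c"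
  using assms unfolding tree_space_def by blast

lemma mem_geod_iff:
  assumes T: "tree_space X" and X: "a \<in> X" "b \<in> X"
  shows "c \<in> geod X a b \<longleftrightarrow> c \<in> X \<and> btw a c b"
proof
  assume "c \<in> geod X a b"
  then show "c \<in> X \<and> btw a c b"
    using geodesic_segment_btw geod_geodesic_segment[OF assms] by blast
next
  assume c: "c \<in> X \<and> btw a c b"
  have "geodesic_segment X a b (geod X a c \<union> geod X c b)"
    using geodesic_segment_append geod_geodesic_segment[OF T] X c by blast
  then have "geod X a b = geod X a c \<union> geod X c b" by (rule geod_eqI[OF assms])
  moreover have "c \<in> geod X a c"
    using geodesic_segment_ends geod_geodesic_segment[OF T] X c by blast
  ultimately show "c \<in> geod X a b" by blast
qed

lemma btw_linear:
  assumes T: "tree_space X" and X: "q \<in> X" "u \<in> X" "m \<in> X" "n \<in> X"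
    and "btw q m u" "btw q n u" "dist q n \<le> dist q m"
  shows "btw q n m"
proof -
  have "m \<in> geod X q u" "n \<in> geod X q u" using assms mem_geod_iff[OF T X(1,2)] by blast+
  then have "dist n m = \<bar>dist q n - dist q m\<bar>"
    using geodesic_segment_dist[OF geod_geodesic_segment[OF T X(1,2)]] by blast
  then show ?thesis using \<open>dist q n \<le> dist q m\<close> unfolding btw_def by simp
qed

lemma geod_branch_point:
  assumes T: "tree_space X" and X: "a \<in> X" "b \<in> X" "c \<in> X"
  obtains m where "m \<in> X" "btw a m b" "btw a m c"
    "\<And>p. p \<in> X \<Longrightarrow> btw a p b \<Longrightarrow> btw a p c \<Longrightarrow> dist a p \<le> dist a m"
proof -
  obtain g1 where g1: "g1 ` {0..dist a b} = geod X a b" "g1 0 = a" "unit_speed (dist a b) g1"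
    using geod_geodesic_segment[OF T X(1,2)] by (rule geodesic_segmentE)
  obtain g2 where g2: "g2 ` {0..dist a c} = geod X a c" "g2 0 = a" "unit_speed (dist a c) g2"
    using geod_geodesic_segment[OF T X(1,3)] by (rule geodesic_segmentE)
  define S where "S = {t \<in> {0..min (dist a b) (dist a c)}. g1 t = g2 t}"
  define t0 where "t0 = Sup S"
  have "0 \<in> S" using g1(2) g2(2) unfolding S_def by simp
  have "bdd_above S" unfolding S_def by (rule bdd_aboveI[of _ "dist a b"]) auto
  have upper: "t \<le> t0" if "t \<in> S" for t
    unfolding t0_def using cSup_upper[OF that \<open>bdd_above S\<close>] .
  have "t0 \<le> min (dist a b) (dist a c)"
    unfolding t0_def by (rule cSup_least) (use \<open>0 \<in> S\<close> in blast, simp add: S_def)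
  then have t0: "t0 \<in> {0..dist a b}" "t0 \<in> {0..dist a c}" using upper[OF \<open>0 \<in> S\<close>] by auto
  \<comment> \<open>Both parametrisations are 1-Lipschitz, so they still agree at the supremum.\<close>
  have "g1 t0 = g2 t0"
  proof (rule ccontr)
    define e where "e = dist (g1 t0) (g2 t0)"
    assume "g1 t0 \<noteq> g2 t0"
    then have "0 < e" unfolding e_def by simp
    then obtain t where t: "t \<in> S" "t0 - e / 2 < t"
      using less_cSupD[of S "t0 - e / 2"] \<open>0 \<in> S\<close> unfolding t0_def by fastforce
    have "t \<in> {0..dist a b}" "t \<in> {0..dist a c}" "g1 t = g2 t" using t(1) unfolding S_def by auto
    then have "e \<le> (t0 - t) + (t0 - t)"
      using dist_triangle[of "g1 t0" "g2 t0" "g1 t"] unfolding e_def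
      using unit_speedD[OF g1(3) t0(1), of t] unit_speedD[OF g2(3), of t t0] t0 upper[OF t(1)]
      by simp
    then show False using t(2) by simp
  qed
  show ?thesis
  proof
    show "g1 t0 \<in> X" "btw a (g1 t0) b" "btw a (g1 t0) c"
      using t0 g1(1) g2(1) \<open>g1 t0 = g2 t0\<close> mem_geod_iff[OF T] X by blast+
    fix p assume p: "p \<in> X" "btw a p b" "btw a p c"
    then have "p \<in> g1 ` {0..dist a b}" "p \<in> g2 ` {0..dist a c}"
      using g1(1) g2(1) mem_geod_iff[OF T] X by blast+
    then have "dist a p \<in> S"
      using unit_speed_inverse[OF g1(3)] unit_speed_inverse[OF g2(3)] g1(2) g2(2)
      unfolding S_def by auto
    moreover have "dist a (g1 t0) = t0" using unit_speedD[OF g1(3), of 0 t0] t0 g1(2) by simp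
    ultimately show "dist a p \<le> dist a (g1 t0)" using upper by simp
  qed
qed

lemma median_exists:
  assumes T: "tree_space X" and X: "a \<in> X" "b \<in> X" "c \<in> X"
  obtains m where "m \<in> X" "btw a m b" "btw a m c" "btw b m c"
proof -
  obtain m where m: "m \<in> X" "btw a m b" "btw a m c"
      and max: "\<And>p. p \<in> X \<Longrightarrow> btw a p b \<Longrightarrow> btw a p c \<Longrightarrow> dist a p \<le> dist a m"
    using geod_branch_point[OF T X] by blast
  have "geod X b m \<inter> geod X m c \<subseteq> {m}"
  proof
    fix p assume "p \<in> geod X b m \<inter> geod X m c"
    then have p: "p \<in> X" "btw b p m" "btw c p m"
      using mem_geod_iff[OF T X(2) m(1)] mem_geod_iff[OF T m(1) X(3)] btw_sym[of m p c] by auto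
    have "btw b m a" "btw c m a" using m btw_sym by blast+
    then have "btw a p b" "btw a p c" "btw p m a"
      using btw_trans[of b p m a] btw_trans[of c p m a] btw_shrink[of b p m a] p btw_sym by blast+
    then have "dist p m = 0"
      using max[OF p(1)] dist_commute[of a p] dist_commute[of a m] zero_le_dist[of p m]
      unfolding btw_def by linarith
    then show "p \<in> {m}" by simp
  qed
  moreover have "m \<in> geod X b m" "m \<in> geod X m c"
    using mem_geod_iff[OF T X(2) m(1)] mem_geod_iff[OF T m(1) X(3)] m(1) by simp_all
  ultimately have "geod X b m \<inter> geod X m c = {m}" by blast
  then have "geod X b m \<union> geod X m c = geod X b c" using geod_union[OF T X(2) m(1) X(3)] by blast
  then have "btw b m c" using \<open>m \<in> geod X b m\<close> mem_geod_iff[OF T X(2,3)] by blast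
  then show ?thesis using that m by blast
qed

lemma not_btw_same_branch:
  assumes T: "tree_space X" and X: "q \<in> X" "u \<in> X" "m \<in> X" "n \<in> X"
    and "btw q m u" "btw q n u" "m \<noteq> q" "n \<noteq> q" "btw q m a" "btw q n b"
  shows "\<not> btw a q b"
proof
  assume "btw a q b"
  show False
  proof (cases "dist q m \<le> dist q n")
    case True
    then have "btw q m n" using btw_linear[OF T X(1,2,4,3)] assms by blast
    then have "btw q m b" using btw_trans assms by blast
    then show False using btw_opposite_eq \<open>btw a q b\<close> assms by blast
  next
    case False
    then have "btw q n m" using btw_linear[OF T X] assms by simp
    then have "btw q n a" using btw_trans assms by blast
    then show False using btw_opposite_eq \<open>btw a q b\<close> btw_sym assms by blast
  qed
qed

lemma btw_beyond:
  assumes T: "tree_space X" and X: "q \<in> X" "m \<in> X" "a \<in> X" "u \<in> X"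
    and "btw m q a" "btw q m u" "m \<noteq> q"
  shows "btw u q a"
proof -
  obtain n where n: "n \<in> X" "btw q n a" "btw q n u" "btw a n u"
    using median_exists[OF T X(1,3,4)] by blast
  have "n = q"
  proof (rule ccontr)
    assume "n \<noteq> q"
    then have "\<not> btw m q a"
      using not_btw_same_branch[OF T X(1,4,2) n(1)] assms n by simp
    then show False using assms by blast
  qed
  then show ?thesis using n(4) btw_sym by blast
qed

lemma btw_separates:
  assumes T: "tree_space X" and X: "q \<in> X" "x \<in> X" "y \<in> X" "u \<in> X" and "btw x q y"
  shows "btw u q x \<or> btw u q y"
proof (rule ccontr)
  assume neither: "\<not> (btw u q x \<or> btw u q y)"
  obtain n1 where n1: "n1 \<in> X" "btw q n1 x" "btw q n1 u" "btw x n1 u"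
    using median_exists[OF T X(1,2,4)] by blast
  obtain n2 where n2: "n2 \<in> X" "btw q n2 y" "btw q n2 u" "btw y n2 u"
    using median_exists[OF T X(1,3,4)] by blast
  have "n1 \<noteq> q" "n2 \<noteq> q" using n1(4) n2(4) neither btw_sym by blast+
  then have "\<not> btw x q y" using not_btw_same_branch[OF T X(1,4) n1(1) n2(1)] n1 n2 by blast
  then show False using assms by blast
qed

lemma mem_geod_or_btw:
  assumes T: "tree_space X" and X: "w \<in> X" "w' \<in> X" "x \<in> X" "y \<in> X" and "btw w x y"
  shows "x \<in> geod X w w' \<or> btw w' x y"
proof -
  obtain m where m: "m \<in> X" "btw w m x" "btw w m w'" "btw x m w'"
    using median_exists[OF T X(1,3,2)] by blast
  show ?thesis
  proof (cases "m = x")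
    case True
    then show ?thesis using m mem_geod_iff[OF T X(1,2)] X(3) by blast
  next
    case False
    have "btw m x y" using btw_shrink m(2) assms(6) by blast
    then have "btw w' x y" using btw_beyond[OF T X(3) m(1) X(4) X(2)] m(4) False by blast
    then show ?thesis ..
  qed
qed

lemma zone1_iff: "zone1 x y z w \<longleftrightarrow> btw w x y \<and> btw w x z \<and> 0 < gromov y z x"
  using dist_commute[of x w] unfolding zone1_def gromov_def btw_def by argo

lemma zone1_or_zone2_iff:
  "zone1 x y z w \<or> zone2 x y z w \<longleftrightarrow> gromov x y w = gromov x z w \<and> gromov x z w < gromov y z w"
  using dist_triangle[of w y x] dist_commute[of x w] unfolding zone1_def zone2_def gromov_def
  by argo

lemma zone1_or_zone2_iff_not_btw:
  assumes T: "tree_space X" and X: "x \<in> X" "y \<in> X" "z \<in> X" "r \<in> X" "u \<in> X"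
    and r: "btw x r y" "btw x r z" "btw y r z"
  shows "zone1 x y z u \<or> zone2 x y z u \<longleftrightarrow> \<not> btw u r x"
proof -
  let ?P = "gromov x y u = gromov x z u \<and> gromov x z u < gromov y z u"
  have d: "dist x y = dist r x + dist r y" "dist x z = dist r x + dist r z"
    "dist y z = dist r y + dist r z"
    using r dist_commute[of x r] dist_commute[of y r] unfolding btw_def by simp_all
  have not_P: "\<not> ?P" if "btw u r x" "btw u r y \<or> btw u r z"
    using that d unfolding gromov_def btw_def by auto
  have P: "?P \<longleftrightarrow> \<not> btw u r x" if "btw u r y" "btw u r z"
  proof -
    have "gromov x y u = (dist u x + dist u r - dist r x) / 2"
      "gromov x z u = (dist u x + dist u r - dist r x) / 2" "gromov y z u = dist u r"
      using that[unfolded btw_def, symmetric] d unfolding gromov_def by simp_all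
    then show ?thesis using dist_triangle[of u x r] unfolding btw_def by auto
  qed
  show ?thesis
    using btw_separates[OF T X(4,1,2,5) r(1)] btw_separates[OF T X(4,1,3,5) r(2)]
      btw_separates[OF T X(4,2,3,5) r(3)] not_P P zone1_or_zone2_iff by blast
qed

lemma mem_geod_of_zone1:
  assumes T: "tree_space X" and X: "w \<in> X" "w' \<in> X" "x \<in> X" "y \<in> X" "z \<in> X"
    and "zone1 x y z w" "\<not> zone1 x y z w'"
  shows "x \<in> geod X w w'"
proof (rule ccontr)
  assume x: "x \<notin> geod X w w'"
  from \<open>zone1 x y z w\<close> have w: "btw w x y" "btw w x z" "0 < gromov y z x"
    unfolding zone1_iff by simp_all
  have "btw w' x y" using mem_geod_or_btw[OF T X(1-4) w(1)] x by blast
  moreover have "btw w' x z" using mem_geod_or_btw[OF T X(1-3,5) w(2)] x by blast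
  ultimately have "zone1 x y z w'" unfolding zone1_iff using w(3) by simp
  then show False using \<open>\<not> zone1 x y z w'\<close> by contradiction
qed

lemma mem_geod_of_zone2:
  assumes T: "tree_space X" and X: "w \<in> X" "w' \<in> X" "x \<in> X" "y \<in> X" "z \<in> X" "r \<in> X"
    and r: "btw x r y" "btw x r z" "btw y r z"
    and "zone2 x y z w" "\<not> zone1 x y z w'" "\<not> zone2 x y z w'"
  shows "r \<in> geod X w w'"
proof -
  have "\<not> btw w r x"
    using zone1_or_zone2_iff_not_btw[OF T X(3-6,1) r] \<open>zone2 x y z w\<close> by blast
  moreover have "btw w' r x"
    using zone1_or_zone2_iff_not_btw[OF T X(3-6,2) r] \<open>\<not> zone1 x y z w'\<close> \<open>\<not> zone2 x y z w'\<close>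
    by blast
  ultimately have "r \<in> geod X w' w" using mem_geod_or_btw[OF T X(2,1,6,3)] by blast
  then show ?thesis using mem_geod_iff[OF T X(2,1)] mem_geod_iff[OF T X(1,2)] btw_sym by blast
qed

theorem lemma3:
  fixes X V :: "'a::metric_space set" and x y z r :: 'a
  assumes "tree_space X"
    and "x \<in> X" "y \<in> X" "z \<in> X"
    and "x \<noteq> y" "y \<noteq> z" "x \<noteq> z"
    and "r \<in> X" "r \<in> geod X x y" "r \<in> geod X y z" "r \<in> geod X x z"
    and "finite V" "V \<subseteq> X - {x, y, z}"
  shows "(\<forall>w\<in>V. zone1 x y z w \<longrightarrow>
            (\<forall>w'\<in>V. \<not> zone1 x y z w' \<longrightarrow> x \<in> geod X w w'))
       \<and> (\<forall>w\<in>V. zone2 x y z w \<longrightarrow>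
            (\<forall>w'\<in>V. \<not> zone1 x y z w' \<and> \<not> zone2 x y z w' \<longrightarrow> r \<in> geod X w w'))"
proof -
  note T = \<open>tree_space X\<close> and X = \<open>x \<in> X\<close> \<open>y \<in> X\<close> \<open>z \<in> X\<close> \<open>r \<in> X\<close>
  have V: "v \<in> X" if "v \<in> V" for v using that \<open>V \<subseteq> X - {x, y, z}\<close> by blast
  have r: "btw x r y" "btw x r z" "btw y r z"
    using mem_geod_iff[OF T X(1,2)] mem_geod_iff[OF T X(1,3)] mem_geod_iff[OF T X(2,3)]
      \<open>r \<in> geod X x y\<close> \<open>r \<in> geod X x z\<close> \<open>r \<in> geod X y z\<close> by blast+
  show ?thesis
  proof (intro conjI ballI impI)
    fix w w' assume "w \<in> V" "zone1 x y z w" "w' \<in> V" "\<not> zone1 x y z w'"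
    then show "x \<in> geod X w w'" using mem_geod_of_zone1[OF T V V X(1-3)] by blast
  next
    fix w w' assume "w \<in> V" "zone2 x y z w" "w' \<in> V" "\<not> zone1 x y z w' \<and> \<not> zone2 x y z w'"
    then show "r \<in> geod X w w'" using mem_geod_of_zone2[OF T V V X r] by blast
  qed
qed

end
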